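(* For every $h\in\mathbb{C}$ with $|h-1|<1$, there exists a cubic polynomial $p$ with three distinct (simple) roots which is not unicritical, such that $N_{h,p}$ is not convergent, i.e. the Fatou set of $N_{h,p}$ is not equal to the union of the basins of attraction of the roots of $p$.
   Context: For a complex polynomial $p$ and $h\in\mathbb{C}\setminus\{0\}$, the relaxed Newton map is $N_{h,p}(z)=z-h\,\frac{p(z)}{p'(z)}$, a rational map of the Riemann sphere whose finite fixed points are the roots of $p$; a simple root is a fixed point with multiplier $1-h$, attracting when $|h-1|<1$. The basin of an attracting fixed point $z_0$ is $\{z:\lim_{k\to\infty}N_{h,p}^k(z)=z_0\}$. A polynomial is unicritical if it has the form $(z-\alpha)^n+\beta$. A polynomial is generic if all its roots are simple. *)

theory Defs
  imports "HOL-Computational_Algebra.Polynomial" Complex_Main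
begin

text \<open>Riemann sphere modelled as complex option; None is the point at infinity.\<close>

text \<open>At a finite point where p' vanishes: if p also vanishes (multiple root) the
  singularity is removable with value z, otherwise the value is infinity.
  At infinity: for deg p = d >= 1, N(z) = (1 - h/d) z + O(1), so infinity is fixed
  unless h = d, in which case N(infinity) = - coeff p (d-1) / (d * lead_coeff p).\<close>
definition relaxed_newton :: "complex \<Rightarrow> complex poly \<Rightarrow> complex option \<Rightarrow> complex option" where
  "relaxed_newton h p w = (case w of
      None \<Rightarrow> (if degree p \<ge> 1 \<and> h = of_nat (degree p)
               then Some (- coeff p (degree p - 1) / (of_nat (degree p) * lead_coeff p))
               else None)
    | Some z \<Rightarrow> (if poly (pderiv p) z = 0
                 then (if poly p z = 0 then Some z else None)
                 else Some (z - h * poly p z / poly (pderiv p) z)))"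

definition chordal_dist :: "complex option \<Rightarrow> complex option \<Rightarrow> real" where
  "chordal_dist u v = (case (u, v) of
      (Some z, Some w) \<Rightarrow> 2 * cmod (z - w) / sqrt ((1 + (cmod z)\<^sup>2) * (1 + (cmod w)\<^sup>2))
    | (Some z, None) \<Rightarrow> 2 / sqrt (1 + (cmod z)\<^sup>2)
    | (None, Some w) \<Rightarrow> 2 / sqrt (1 + (cmod w)\<^sup>2)
    | (None, None) \<Rightarrow> 0)"

definition sball :: "complex option \<Rightarrow> real \<Rightarrow> complex option set" where
  "sball x e = {y. chordal_dist x y < e}"

definition locally_unif_conv ::
  "complex option set \<Rightarrow> (nat \<Rightarrow> complex option \<Rightarrow> complex option) \<Rightarrow> (complex option \<Rightarrow> complex option) \<Rightarrow> bool" where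
  "locally_unif_conv U F g \<longleftrightarrow>
     (\<forall>x\<in>U. \<exists>\<delta>>0. sball x \<delta> \<subseteq> U \<and>
        (\<forall>\<epsilon>>0. \<exists>N. \<forall>n\<ge>N. \<forall>y\<in>sball x \<delta>. chordal_dist (F n y) (g y) < \<epsilon>))"

definition normal_family :: "complex option set \<Rightarrow> (nat \<Rightarrow> complex option \<Rightarrow> complex option) \<Rightarrow> bool" where
  "normal_family U F \<longleftrightarrow>
     (\<forall>r :: nat \<Rightarrow> nat. \<exists>s g. strict_mono s \<and> locally_unif_conv U (\<lambda>n. F (r (s n))) g)"

definition fatou_set :: "(complex option \<Rightarrow> complex option) \<Rightarrow> complex option set" where
  "fatou_set f = {x. \<exists>e>0. normal_family (sball x e) (\<lambda>k. f ^^ k)}"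

definition basin :: "(complex option \<Rightarrow> complex option) \<Rightarrow> complex option \<Rightarrow> complex option set" where
  "basin f z0 = {x. (\<lambda>k. chordal_dist ((f ^^ k) x) z0) \<longlonglongrightarrow> 0}"

text \<open>Unicritical: (z - alpha)^n + beta, up to a nonzero scalar factor
  (the Newton map is unchanged by scaling p).\<close>
definition unicritical :: "complex poly \<Rightarrow> bool" where
  "unicritical p \<longleftrightarrow> (\<exists>a \<alpha> \<beta> (n::nat). a \<noteq> 0 \<and> p = smult a ([:-\<alpha>, 1:] ^ n + [:\<beta>:]))"

end

theory Submission
  imports Defs "HOL-Analysis.Product_Vector" "HOL-Library.Infinite_Set"
begin

(* Take p(z) = h (h - 2) z^3 + h (1 - h) z^2 + 2 h z - 2. Its relaxed Newton map N swaps 0 and 1,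
   and 0 is a critical point of N, so {0, 1} is a superattracting 2-cycle. Near 0 the map N o N
   contracts, so on a small disc the even iterates of N converge uniformly to 0 and the odd ones
   to 1: the iterates form a normal family and 0 lies in the Fatou set. But the orbit of 0 is the
   cycle itself, which contains no root, so 0 lies in no basin of a root. That p has simple roots
   and is not unicritical reduces to the non-vanishing of a cubic and a quadratic in h on the disc
   |h - 1| < 1. *)

section \<open>The chordal metric\<close>

(* Inverse stereographic projection onto the unit sphere of C x R, with infinity at the north
   pole (0, 1); the chordal distance is the Euclidean distance of the images. *)
definition stereo :: "complex option \<Rightarrow> complex \<times> real" where
  "stereo u = (case u of
      None \<Rightarrow> (0, 1)
    | Some z \<Rightarrow> (of_real (2 / (1 + (cmod z)\<^sup>2)) * z, 1 - 2 / (1 + (cmod z)\<^sup>2)))"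

lemma dist_stereo_Some_Some:
  "dist (stereo (Some z)) (stereo (Some w))
     = 2 * cmod (z - w) / sqrt ((1 + (cmod z)\<^sup>2) * (1 + (cmod w)\<^sup>2))"
proof -
  define A where "A = 1 + (cmod z)\<^sup>2"
  define B where "B = 1 + (cmod w)\<^sup>2"
  have pos: "A > 0" "B > 0"
    by (simp_all add: A_def B_def add_pos_nonneg)
  have key: "(cmod (of_real B * z - of_real A * w))\<^sup>2 + (A - B)\<^sup>2 = A * B * (cmod (z - w))\<^sup>2"
  proof -
    obtain x1 y1 x2 y2 where z: "z = Complex x1 y1" and w: "w = Complex x2 y2"
      by (meson complex.exhaust_sel)
    show ?thesis
      unfolding A_def B_def z w by (simp add: cmod_def) (simp add: power2_eq_square algebra_simps)
  qed
  have "of_real (2 / A) * z - of_real (2 / B) * w = of_real (2 / (A * B)) * (of_real B * z - of_real A * w)"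
    and "1 - 2 / A - (1 - 2 / B) = 2 / (A * B) * (A - B)"
    using pos by (simp_all add: field_simps)
  then have "(dist (stereo (Some z)) (stereo (Some w)))\<^sup>2
      = (2 / (A * B))\<^sup>2 * ((cmod (of_real B * z - of_real A * w))\<^sup>2 + (A - B)\<^sup>2)"
    unfolding stereo_def option.case dist_Pair_Pair A_def[symmetric] B_def[symmetric]
    by (simp only: dist_norm real_norm_def norm_mult norm_of_real power_mult_distrib power2_abs
        distrib_left) simp
  also have "\<dots> = (2 * cmod (z - w) / sqrt (A * B))\<^sup>2"
    unfolding key using pos by (simp add: power2_eq_square)
  finally show ?thesis
    using pos by (simp add: A_def B_def)
qed

lemma dist_stereo_Some_None: "dist (stereo (Some z)) (stereo None) = 2 / sqrt (1 + (cmod z)\<^sup>2)"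
proof -
  define A where "A = 1 + (cmod z)\<^sup>2"
  have pos: "A > 0" by (simp add: A_def add_pos_nonneg)
  have "cmod (of_real (2 / A) * z - 0) = 2 / A * cmod z"
    using pos by (simp add: norm_mult norm_divide)
  then have "(cmod (of_real (2 / A) * z - 0))\<^sup>2 + \<bar>1 - 2 / A - 1\<bar>\<^sup>2 = 4 * (1 + (cmod z)\<^sup>2) / A\<^sup>2"
    by (simp add: power_divide power_mult_distrib add_divide_distrib)
  also have "\<dots> = 4 * A / A\<^sup>2"
    by (simp add: A_def)
  also have "\<dots> = (2 / sqrt A)\<^sup>2"
    using pos by (simp add: power_divide power2_eq_square)
  finally show ?thesis
    using pos unfolding stereo_def option.case dist_Pair_Pair
    by (simp only: dist_norm real_norm_def A_def[symmetric]) simp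
qed

lemma chordal_dist_stereo: "chordal_dist u v = dist (stereo u) (stereo v)"
  by (cases u; cases v)
    (simp_all add: chordal_dist_def dist_stereo_Some_Some dist_stereo_Some_None
      dist_commute[of "stereo None"])

lemma chordal_dist_self [simp]: "chordal_dist u u = 0"
  by (simp add: chordal_dist_stereo)

lemma chordal_dist_triangle: "chordal_dist u w \<le> chordal_dist u v + chordal_dist v w"
  unfolding chordal_dist_stereo by (rule dist_triangle)

lemma chordal_dist_eq_0_iff: "chordal_dist u v = 0 \<longleftrightarrow> u = v"
proof -
  have "1 + (cmod a)\<^sup>2 \<noteq> 0" for a
    by (metis add_pos_nonneg zero_le_power2 zero_less_one less_irrefl)
  then show ?thesis
    by (cases u; cases v) (auto simp: chordal_dist_def)
qed

lemma chordal_dist_Some_le: "chordal_dist (Some a) (Some b) \<le> 2 * cmod (a - b)"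
proof -
  have "1 \<le> sqrt ((1 + (cmod a)\<^sup>2) * (1 + (cmod b)\<^sup>2))"
    using mult_mono[of 1 "1 + (cmod a)\<^sup>2" 1 "1 + (cmod b)\<^sup>2"] by simp
  then show ?thesis
    by (simp add: chordal_dist_def divide_le_eq mult_le_cancel_left1)
qed

lemma min_le_chordal_dist_Some_0: "min 1 (cmod z) \<le> chordal_dist (Some 0) (Some z)"
proof -
  have "sqrt (1 + (cmod z)\<^sup>2) \<le> 1 + cmod z"
    by (rule real_le_lsqrt) (auto simp: power2_eq_square algebra_simps)
  also have "\<dots> \<le> 2 * max 1 (cmod z)"
    by simp
  finally have "2 * cmod z / (2 * max 1 (cmod z)) \<le> 2 * cmod z / sqrt (1 + (cmod z)\<^sup>2)"
    by (intro frac_le) (auto simp: add_pos_nonneg)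
  moreover have "2 * cmod z / (2 * max 1 (cmod z)) = min 1 (cmod z)"
    by (auto simp: max_def min_def)
  ultimately show ?thesis
    by (simp add: chordal_dist_def)
qed

lemma sball_subset_sball:
  assumes "x \<in> sball c e"
  obtains d where "d > 0" "sball x d \<subseteq> sball c e"
proof
  show "e - chordal_dist c x > 0"
    using assms by (simp add: sball_def)
  show "sball x (e - chordal_dist c x) \<subseteq> sball c e"
  proof
    fix y assume "y \<in> sball x (e - chordal_dist c x)"
    with chordal_dist_triangle[of c y x] show "y \<in> sball c e"
      by (simp add: sball_def)
  qed
qed

lemma sball_Some_0_subset: "sball (Some 0) (min 1 d) \<subseteq> Some ` {z. cmod z < d}"
proof
  fix y assume y: "y \<in> sball (Some 0) (min 1 d)"
  show "y \<in> Some ` {z. cmod z < d}"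
  proof (cases y)
    case None
    with y show ?thesis by (simp add: sball_def chordal_dist_def)
  next
    case (Some z)
    with y min_le_chordal_dist_Some_0[of z] show ?thesis
      by (auto simp: sball_def)
  qed
qed

section \<open>Uniform convergence and normal families\<close>

definition unif_conv_on :: "complex option set \<Rightarrow> (nat \<Rightarrow> complex option \<Rightarrow> complex option) \<Rightarrow>
    (complex option \<Rightarrow> complex option) \<Rightarrow> bool" where
  "unif_conv_on U F g \<longleftrightarrow>
     (\<forall>\<epsilon>>0. eventually (\<lambda>n. \<forall>y\<in>U. chordal_dist (F n y) (g y) < \<epsilon>) sequentially)"

lemma locally_unif_conv_sballI:
  assumes "unif_conv_on (sball c e) F g"
  shows "locally_unif_conv (sball c e) F g"
  unfolding locally_unif_conv_def
proof
  fix x assume "x \<in> sball c e"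
  then obtain d where d: "d > 0" "sball x d \<subseteq> sball c e"
    by (rule sball_subset_sball)
  have "\<exists>N. \<forall>n\<ge>N. \<forall>y\<in>sball x d. chordal_dist (F n y) (g y) < \<epsilon>" if "\<epsilon> > 0" for \<epsilon>
    using assms that d(2) unfolding unif_conv_on_def eventually_sequentially by blast
  with d show "\<exists>\<delta>>0. sball x \<delta> \<subseteq> sball c e \<and>
      (\<forall>\<epsilon>>0. \<exists>N. \<forall>n\<ge>N. \<forall>y\<in>sball x \<delta>. chordal_dist (F n y) (g y) < \<epsilon>)"
    by blast
qed

lemma unif_conv_on_compose:
  assumes "unif_conv_on U F g" "filterlim t at_top sequentially"
  shows "unif_conv_on U (\<lambda>n. F (t n)) g"
  using assms unfolding unif_conv_on_def by (auto intro: eventually_compose_filterlim)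

lemma filterlim_at_top_if_finite_fibres:
  fixes t :: "nat \<Rightarrow> nat"
  assumes "\<And>c. finite {n. t n = c}"
  shows "filterlim t at_top sequentially"
  unfolding filterlim_at_top
proof
  fix C
  have "{n. \<not> C \<le> t n} = (\<Union>c<C. {n. t n = c})"
    by auto
  then have "finite {n. \<not> C \<le> t n}"
    using assms by simp
  then show "eventually (\<lambda>n. C \<le> t n) sequentially"
    by (simp add: eventually_cofinite flip: cofinite_eq_sequentially)
qed

lemma unif_conv_on_subseq:
  fixes t :: "nat \<Rightarrow> nat"
  assumes "unif_conv_on U F g"
  obtains s g' where "strict_mono s" "unif_conv_on U (\<lambda>n. F (t (s n))) g'"
proof (cases "\<exists>c. infinite {n. t n = c}")
  case True
  then obtain c where "infinite {n. t n = c}"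
    by blast
  then obtain s :: "nat \<Rightarrow> nat" where "strict_mono s" "\<And>n. t (s n) = c"
    using infinite_enumerate by blast
  moreover have "unif_conv_on U (\<lambda>n. F c) (F c)"
    by (simp add: unif_conv_on_def)
  ultimately show ?thesis
    using that by simp
next
  case False
  then have "unif_conv_on U (\<lambda>n. F (t (id n))) g"
    by (auto intro: unif_conv_on_compose[OF assms] filterlim_at_top_if_finite_fibres)
  then show ?thesis
    using that[of id] by (simp add: strict_mono_def)
qed

lemma normal_family_if_unif_conv_on_residues:
  assumes "m > 0" and "\<And>j. j < m \<Longrightarrow> unif_conv_on (sball c e) (\<lambda>k. F (m * k + j)) (a j)"
  shows "normal_family (sball c e) F"
  unfolding normal_family_def
proof
  fix r :: "nat \<Rightarrow> nat"
  have "(\<Union>j<m. {n. r n mod m = j}) = UNIV"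
    using assms(1) by auto
  then have "infinite (\<Union>j<m. {n. r n mod m = j})"
    by simp
  then obtain j where j: "j < m" "infinite {n. r n mod m = j}"
    by blast
  then obtain s1 :: "nat \<Rightarrow> nat" where s1: "strict_mono s1" "\<And>n. r (s1 n) mod m = j"
    using infinite_enumerate by blast
  obtain s2 g where s2: "strict_mono s2"
    and g: "unif_conv_on (sball c e) (\<lambda>n. F (m * (r (s1 (s2 n)) div m) + j)) g"
    using unif_conv_on_subseq[OF assms(2)[OF j(1)], of "\<lambda>n. r (s1 n) div m"] by blast
  have "m * (r (s1 (s2 n)) div m) + j = r (s1 (s2 n))" for n
    using s1(2)[of "s2 n"] by (metis div_mult_mod_eq mult.commute)
  with g have "locally_unif_conv (sball c e) (\<lambda>n. F (r ((s1 \<circ> s2) n))) g"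
    by (simp add: locally_unif_conv_sballI)
  moreover have "strict_mono (s1 \<circ> s2)"
    using s1(1) s2 by (rule strict_mono_o)
  ultimately show "\<exists>s g. strict_mono s \<and> locally_unif_conv (sball c e) (\<lambda>n. F (r (s n))) g"
    by blast
qed

lemma unif_conv_on_Some_const:
  assumes "U \<subseteq> Some ` S" and "\<And>k z. z \<in> S \<Longrightarrow> F k (Some z) = Some (G k z)"
    and "\<And>\<epsilon>. \<epsilon> > 0 \<Longrightarrow> eventually (\<lambda>k. \<forall>z\<in>S. cmod (G k z - c) < \<epsilon>) sequentially"
  shows "unif_conv_on U F (\<lambda>_. Some c)"
  unfolding unif_conv_on_def
proof (intro allI impI)
  fix \<epsilon> :: real assume "\<epsilon> > 0"
  then have "eventually (\<lambda>k. \<forall>z\<in>S. cmod (G k z - c) < \<epsilon> / 2) sequentially"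
    by (intro assms(3)) simp
  then show "eventually (\<lambda>k. \<forall>y\<in>U. chordal_dist (F k y) (Some c) < \<epsilon>) sequentially"
  proof (rule eventually_mono)
    fix k assume small: "\<forall>z\<in>S. cmod (G k z - c) < \<epsilon> / 2"
    show "\<forall>y\<in>U. chordal_dist (F k y) (Some c) < \<epsilon>"
    proof
      fix y assume "y \<in> U"
      then obtain z where "z \<in> S" "y = Some z"
        using assms(1) by blast
      then show "chordal_dist (F k y) (Some c) < \<epsilon>"
        using chordal_dist_Some_le[of "G k z" c] small assms(2) by fastforce
    qed
  qed
qed

section \<open>Iteration near attracting points\<close>

lemma funpow_Some:
  assumes "\<And>z. z \<in> S \<Longrightarrow> F (Some z) = Some (g z)" and "g ` S \<subseteq> S" and "z \<in> S"
  shows "(F ^^ k) (Some z) = Some ((g ^^ k) z) \<and> (g ^^ k) z \<in> S"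
  by (induction k) (use assms in auto)

lemma eventually_contraction_at_fixpoint:
  assumes "(g has_field_derivative D) (at c)" and "g c = c" and "cmod D < r"
  shows "eventually (\<lambda>z. dist (g z) c \<le> r * dist z c) (nhds c)"
proof -
  have "((\<lambda>z. (g z - c) / (z - c)) \<longlongrightarrow> D) (at c)"
    using assms(1,2) by (simp add: has_field_derivative_iff)
  then have "eventually (\<lambda>z. dist ((g z - c) / (z - c)) D < r - cmod D) (at c)"
    using assms(3) by (intro tendstoD) auto
  then have "eventually (\<lambda>z. cmod ((g z - c) / (z - c)) < r) (at c)"
    by (rule eventually_mono)
      (metis dist_norm norm_triangle_sub add.commute less_diff_eq order.strict_trans1)
  then have "eventually (\<lambda>z. z \<noteq> c \<longrightarrow> cmod (g z - c) \<le> r * cmod (z - c)) (nhds c)"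
    unfolding eventually_at_filter
    by (rule eventually_mono) (auto simp: norm_divide divide_less_eq less_imp_le)
  then show ?thesis
    by (rule eventually_mono) (use assms(2) in \<open>auto simp: dist_norm\<close>)
qed

lemma funpow_contraction:
  fixes g :: "'a::metric_space \<Rightarrow> 'a"
  assumes "\<And>z. dist z c < \<delta> \<Longrightarrow> dist (g z) c \<le> r * dist z c" and "0 \<le> r" "r \<le> 1"
    and "dist z c < \<delta>"
  shows "dist ((g ^^ k) z) c \<le> r ^ k * dist z c"
proof (induction k)
  case (Suc k)
  have "r ^ k * dist z c \<le> dist z c"
    using assms(2,3) by (simp add: mult_left_le_one_le power_le_one)
  with Suc.IH have "dist ((g ^^ k) z) c < \<delta>"
    using assms(4) by linarith
  then have "dist ((g ^^ Suc k) z) c \<le> r * dist ((g ^^ k) z) c"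
    using assms(1) by simp
  also have "\<dots> \<le> r ^ Suc k * dist z c"
    using mult_left_mono[OF Suc.IH assms(2)] by (simp add: mult.assoc)
  finally show ?case .
qed simp

lemma periodic_point_not_in_basin:
  assumes "(f ^^ m) x = x" and "m > 0" and "x \<noteq> z"
  shows "x \<notin> basin f z"
proof
  assume "x \<in> basin f z"
  then have "(\<lambda>k. chordal_dist ((f ^^ k) x) z) \<longlonglongrightarrow> 0"
    by (simp add: basin_def)
  moreover have "strict_mono (\<lambda>k. m * k)"
    using assms(2) by (simp add: strict_mono_def)
  ultimately have "(\<lambda>k. chordal_dist ((f ^^ (m * k)) x) z) \<longlonglongrightarrow> 0"
    by (rule LIMSEQ_subseq_LIMSEQ[unfolded comp_def])
  moreover have "(f ^^ (m * k)) x = x" for k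
    using funpow_mod_eq[OF assms(1), of "m * k"] by simp
  ultimately have "chordal_dist x z = 0"
    by (simp add: LIMSEQ_const_iff)
  with assms(3) show False
    by (simp add: chordal_dist_eq_0_iff)
qed

section \<open>Relaxed Newton maps and unicritical cubics\<close>

definition newton :: "complex \<Rightarrow> complex poly \<Rightarrow> complex \<Rightarrow> complex" where
  "newton h p z = z - h * poly p z / poly (pderiv p) z"

lemma relaxed_newton_Some:
  "poly (pderiv p) z \<noteq> 0 \<Longrightarrow> relaxed_newton h p (Some z) = Some (newton h p z)"
  by (simp add: relaxed_newton_def newton_def)

lemma has_field_derivative_newton:
  assumes "poly (pderiv p) z \<noteq> 0"
  shows "(newton h p has_field_derivative
           1 - h + h * poly p z * poly (pderiv (pderiv p)) z / (poly (pderiv p) z)\<^sup>2) (at z)"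
proof -
  have "(newton h p has_field_derivative
      1 - h * ((poly (pderiv p) z * poly (pderiv p) z - poly (pderiv (pderiv p)) z * poly p z)
               / (poly (pderiv p) z)\<^sup>2)) (at z)"
    unfolding newton_def
    by (auto intro!: derivative_eq_intros simp: assms power2_eq_square algebra_simps)
  then show ?thesis
    using assms by (simp add: power2_eq_square field_simps)
qed

lemma unicritical_cubic_coeffs:
  assumes "unicritical p" and "degree p = 3"
  shows "(coeff p 2)\<^sup>2 = 3 * coeff p 3 * coeff p 1"
proof -
  obtain a \<alpha> \<beta> n where "a \<noteq> 0" and p: "p = smult a ([:-\<alpha>, 1:] ^ n + [:\<beta>:])"
    using assms(1) unfolding unicritical_def by blast
  have "degree ([:-\<alpha>, 1:] ^ n) = n"
    by (simp add: degree_power_eq)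
  then have "degree ([:-\<alpha>, 1:] ^ n + [:\<beta>:]) = n"
    by (cases "n = 0") (simp_all add: degree_add_eq_left one_pCons)
  with assms(2) \<open>a \<noteq> 0\<close> have "n = 3"
    by (simp add: p)
  have "[:-\<alpha>, 1:] ^ 3 = [:- (\<alpha> ^ 3), 3 * \<alpha>\<^sup>2, - 3 * \<alpha>, 1:]"
    by (simp add: power3_eq_cube power2_eq_square algebra_simps numeral_3_eq_3)
  then have "p = [:a * (\<beta> - \<alpha> ^ 3), a * (3 * \<alpha>\<^sup>2), a * (- 3 * \<alpha>), a:]"
    by (simp add: p \<open>n = 3\<close> algebra_simps)
  then show ?thesis
    by (simp add: numeral_2_eq_2 numeral_3_eq_3 power2_eq_square algebra_simps)
qed

section \<open>A cubic with a superattracting 2-cycle\<close>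

(* The coefficients are forced, up to scaling, by N(0) = 1, N(1) = 0 and N'(0) = 0. *)
definition cycle_cubic :: "complex \<Rightarrow> complex poly" where
  "cycle_cubic h = [:-2, 2 * h, h * (1 - h), h * (h - 2):]"

lemma poly_cycle_cubic:
  "poly (cycle_cubic h) z = h * (h - 2) * z ^ 3 + h * (1 - h) * z\<^sup>2 + 2 * h * z - 2"
  "poly (pderiv (cycle_cubic h)) z = 3 * h * (h - 2) * z\<^sup>2 + 2 * h * (1 - h) * z + 2 * h"
  "poly (pderiv (pderiv (cycle_cubic h))) z = 6 * h * (h - 2) * z + 2 * h * (1 - h)"
  by (simp_all add: cycle_cubic_def pderiv_pCons algebra_simps power2_eq_square power3_eq_cube)

lemma Re_bounds_if_cmod_diff_1_less_1:
  assumes "cmod (h - 1) < 1"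
  shows "0 < Re h" "Re h < 2"
  using abs_Re_le_cmod[of "h - 1"] assms by auto

lemma cubic_nonzero_in_disc:
  assumes "cmod (h - 1) < 1"
  shows "h ^ 3 - 12 * h\<^sup>2 + 46 * h - 54 \<noteq> 0"
proof
  assume zero: "h ^ 3 - 12 * h\<^sup>2 + 46 * h - 54 = 0"
  obtain x y where h: "h = Complex x y"
    by (cases h)
  have disc: "(x - 1)\<^sup>2 + y\<^sup>2 < 1"
    using assms by (simp add: h cmod_def power_less_one_iff abs_less_iff real_sqrt_less_iff)
  have re: "x ^ 3 - 3 * x * y\<^sup>2 - 12 * (x\<^sup>2 - y\<^sup>2) + 46 * x - 54 = 0"
    and im: "y * (3 * x\<^sup>2 - y\<^sup>2 - 24 * x + 46) = 0"
    using arg_cong[OF zero, of Re] arg_cong[OF zero, of Im]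
    by (simp_all add: h power2_eq_square power3_eq_cube algebra_simps)
  show False
  proof (cases "y = 0")
    case True
    have "0 < x" "x < 2"
      using Re_bounds_if_cmod_diff_1_less_1[OF assms] by (simp_all add: h)
    then have "(x - 2) * ((x - 5)\<^sup>2 + 1) < 0"
      by (intro mult_neg_pos) (auto intro: add_nonneg_pos)
    with re True show False
      by (simp add: power2_eq_square power3_eq_cube algebra_simps)
  next
    case False
    with im have "y\<^sup>2 = 3 * x\<^sup>2 - 24 * x + 46"
      by simp
    with disc have "4 * (x - 13 / 4)\<^sup>2 + 15 / 4 < 0"
      by (simp add: power2_eq_square algebra_simps)
    then show False
      using zero_le_power2[of "x - 13 / 4"] by linarith
  qed
qed

lemma quadratic_nonzero_in_disc:
  assumes "cmod (h - 1) < 1"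
  shows "h\<^sup>2 - 8 * h + 13 \<noteq> 0"
proof
  assume "h\<^sup>2 - 8 * h + 13 = 0"
  then have "(h - 4)\<^sup>2 = (of_real (sqrt 3))\<^sup>2"
    by (simp add: power2_eq_square algebra_simps flip: of_real_mult)
  then have "h - 4 = of_real (sqrt 3) \<or> h - 4 = - of_real (sqrt 3)"
    by (simp add: power2_eq_iff)
  then have "Re h = 4 + sqrt 3 \<or> Re h = 4 - sqrt 3"
    by (auto dest: arg_cong[of _ _ Re])
  moreover have "0 < sqrt 3" "sqrt 3 < 2"
    by (simp_all add: real_less_lsqrt)
  ultimately show False
    using Re_bounds_if_cmod_diff_1_less_1[OF assms] by auto
qed

lemma degree_cycle_cubic:
  "h \<noteq> 0 \<Longrightarrow> h \<noteq> 2 \<Longrightarrow> degree (cycle_cubic h) = 3"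
  by (simp add: cycle_cubic_def)

lemma rsquarefree_cycle_cubic:
  assumes "cmod (h - 1) < 1"
  shows "rsquarefree (cycle_cubic h)"
  unfolding rsquarefree_roots
proof (intro allI notI)
  fix z assume "poly (cycle_cubic h) z = 0 \<and> poly (pderiv (cycle_cubic h)) z = 0"
  then have "h\<^sup>2 * (h - 2) * (h ^ 3 - 12 * h\<^sup>2 + 46 * h - 54) = 0"
    unfolding poly_cycle_cubic by algebra
  moreover have "h \<noteq> 0" "h \<noteq> 2"
    using Re_bounds_if_cmod_diff_1_less_1[OF assms] by auto
  ultimately show False
    using cubic_nonzero_in_disc[OF assms] by simp
qed

lemma not_unicritical_cycle_cubic:
  assumes "cmod (h - 1) < 1"
  shows "\<not> unicritical (cycle_cubic h)"
proof
  assume "unicritical (cycle_cubic h)"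
  moreover have "h \<noteq> 0" "h \<noteq> 2"
    using Re_bounds_if_cmod_diff_1_less_1[OF assms] by auto
  ultimately have "(h * (1 - h))\<^sup>2 = 3 * (h * (h - 2)) * (2 * h)"
    using unicritical_cubic_coeffs[of "cycle_cubic h"] degree_cycle_cubic
    by (simp add: cycle_cubic_def numeral_2_eq_2 numeral_3_eq_3)
  then have "h\<^sup>2 * (h\<^sup>2 - 8 * h + 13) = 0"
    by algebra
  with \<open>h \<noteq> 0\<close> quadratic_nonzero_in_disc[OF assms] show False
    by simp
qed

lemma newton_cycle_cubic:
  fixes h :: complex
  defines "p \<equiv> cycle_cubic h"
  assumes "h \<noteq> 0" "h \<noteq> 2"
  shows "poly (pderiv p) 0 \<noteq> 0" "poly (pderiv p) 1 \<noteq> 0"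
    and "newton h p 0 = 1" "newton h p 1 = 0"
    and "(newton h p has_field_derivative 0) (at 0)"
proof -
  show p'0: "poly (pderiv p) 0 \<noteq> 0" and "poly (pderiv p) 1 \<noteq> 0"
    using assms by (simp_all add: p_def poly_cycle_cubic algebra_simps)
  show "newton h p 0 = 1" "newton h p 1 = 0"
    using assms by (simp_all add: p_def newton_def poly_cycle_cubic field_simps)
  have "1 - h + h * poly p 0 * poly (pderiv (pderiv p)) 0 / (poly (pderiv p) 0)\<^sup>2 = 0"
    using assms by (simp add: p_def poly_cycle_cubic field_simps power2_eq_square)
  with has_field_derivative_newton[OF p'0, of h] show "(newton h p has_field_derivative 0) (at 0)"
    by simp
qed

lemma cycle_cubic_superattracting:
  fixes h :: complex
  defines "p \<equiv> cycle_cubic h" and "f \<equiv> newton h (cycle_cubic h)"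
  assumes "h \<noteq> 0" "h \<noteq> 2"
  obtains \<delta> where "\<delta> > 0"
    and "\<And>z. cmod z < \<delta> \<Longrightarrow> poly (pderiv p) z \<noteq> 0 \<and> poly (pderiv p) (f z) \<noteq> 0"
    and "\<And>z. cmod z < \<delta> \<Longrightarrow> cmod (f (f z)) \<le> 1 / 2 * cmod z"
proof -
  note N = newton_cycle_cubic[OF assms(3,4), folded p_def f_def]
  obtain D where "(f has_field_derivative D) (at (f 0))"
    using has_field_derivative_newton[OF N(2)] N(3) unfolding f_def p_def by auto
  from DERIV_chain[OF this N(5)] have "(f \<circ> f has_field_derivative 0) (at 0)"
    by simp
  then have "eventually (\<lambda>z. dist ((f \<circ> f) z) 0 \<le> 1 / 2 * dist z 0) (nhds 0)"
    by (rule eventually_contraction_at_fixpoint) (simp_all add: N(3,4))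
  moreover have "eventually (\<lambda>z. poly (pderiv p) z \<noteq> 0) (nhds 0)"
    using tendsto_poly[OF filterlim_ident, of "pderiv p" 0] N(1) by (rule tendsto_imp_eventually_ne)
  moreover have "eventually (\<lambda>z. poly (pderiv p) (f z) \<noteq> 0) (nhds 0)"
  proof -
    have "(f \<longlongrightarrow> f 0) (nhds 0)"
      using DERIV_isCont[OF N(5)] by (metis isCont_def tendsto_at_iff_tendsto_nhds)
    from tendsto_poly[OF this, of "pderiv p"] N(2,3) show ?thesis
      by (intro tendsto_imp_eventually_ne) simp_all
  qed
  ultimately have "eventually (\<lambda>z. dist ((f \<circ> f) z) 0 \<le> 1 / 2 * dist z 0 \<and>
      poly (pderiv p) z \<noteq> 0 \<and> poly (pderiv p) (f z) \<noteq> 0) (nhds 0)"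
    by (intro eventually_conj)
  then obtain \<delta> where "\<delta> > 0" and "\<And>z. dist z 0 < \<delta> \<Longrightarrow>
      dist ((f \<circ> f) z) 0 \<le> 1 / 2 * dist z 0 \<and> poly (pderiv p) z \<noteq> 0 \<and> poly (pderiv p) (f z) \<noteq> 0"
    unfolding eventually_nhds_metric by blast
  with that show ?thesis
    by simp
qed

lemma cycle_cubic_orbits_near_0:
  fixes h :: complex
  defines "N \<equiv> relaxed_newton h (cycle_cubic h)" and "f \<equiv> newton h (cycle_cubic h)"
  assumes "h \<noteq> 0" "h \<noteq> 2"
  obtains \<delta> where "\<delta> > 0"
    and "\<And>z k. cmod z < \<delta> \<Longrightarrow> (N ^^ (2 * k)) (Some z) = Some (((f \<circ> f) ^^ k) z)"
    and "\<And>z k. cmod z < \<delta> \<Longrightarrow> (N ^^ Suc (2 * k)) (Some z) = Some (f (((f \<circ> f) ^^ k) z))"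
    and "\<And>z k. cmod z < \<delta> \<Longrightarrow> cmod (((f \<circ> f) ^^ k) z) \<le> (1 / 2) ^ k * \<delta>"
proof -
  obtain \<delta> where \<delta>: "\<delta> > 0"
    and nonsing: "\<And>z. cmod z < \<delta> \<Longrightarrow>
      poly (pderiv (cycle_cubic h)) z \<noteq> 0 \<and> poly (pderiv (cycle_cubic h)) (f z) \<noteq> 0"
    and contr: "\<And>z. cmod z < \<delta> \<Longrightarrow> cmod (f (f z)) \<le> 1 / 2 * cmod z"
    using cycle_cubic_superattracting[OF assms(3,4)] unfolding f_def by blast
  define S where "S = {z. cmod z < \<delta>}"
  have "(f \<circ> f) ` S \<subseteq> S"
    using contr \<delta> by (force simp: S_def)
  moreover have "(N ^^ 2) (Some z) = Some ((f \<circ> f) z)" if "z \<in> S" for z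
    using nonsing[of z] that by (simp add: S_def N_def f_def relaxed_newton_Some numeral_2_eq_2)
  ultimately have orbit: "(N ^^ (2 * k)) (Some z) = Some (((f \<circ> f) ^^ k) z) \<and> ((f \<circ> f) ^^ k) z \<in> S"
    if "z \<in> S" for z k
    using funpow_Some[of S "N ^^ 2" "f \<circ> f" z k] that by (simp add: funpow_mult)
  show ?thesis
  proof
    show "(N ^^ (2 * k)) (Some z) = Some (((f \<circ> f) ^^ k) z)" if "cmod z < \<delta>" for z k
      using orbit that by (simp add: S_def)
    show "(N ^^ Suc (2 * k)) (Some z) = Some (f (((f \<circ> f) ^^ k) z))" if "cmod z < \<delta>" for z k
      using orbit[of z k] nonsing[of "((f \<circ> f) ^^ k) z"] that
      by (simp add: S_def N_def f_def relaxed_newton_Some)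
    show "cmod (((f \<circ> f) ^^ k) z) \<le> (1 / 2) ^ k * \<delta>" if "cmod z < \<delta>" for z k
    proof -
      have "cmod (((f \<circ> f) ^^ k) z) \<le> (1 / 2) ^ k * cmod z"
        using funpow_contraction[of 0 \<delta> "f \<circ> f" "1 / 2" z k] contr that by simp
      also have "\<dots> \<le> (1 / 2) ^ k * \<delta>"
        using that by simp
      finally show ?thesis .
    qed
  qed (use \<delta> in simp)
qed

lemma zero_in_fatou_set_cycle_cubic:
  fixes h :: complex
  assumes "h \<noteq> 0" "h \<noteq> 2"
  shows "Some 0 \<in> fatou_set (relaxed_newton h (cycle_cubic h))"
proof -
  define N where "N = relaxed_newton h (cycle_cubic h)"
  define f where "f = newton h (cycle_cubic h)"
  obtain \<delta> where \<delta>: "\<delta> > 0"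
    and even: "\<And>z k. cmod z < \<delta> \<Longrightarrow> (N ^^ (2 * k)) (Some z) = Some (((f \<circ> f) ^^ k) z)"
    and odd: "\<And>z k. cmod z < \<delta> \<Longrightarrow> (N ^^ Suc (2 * k)) (Some z) = Some (f (((f \<circ> f) ^^ k) z))"
    and decay: "\<And>z k. cmod z < \<delta> \<Longrightarrow> cmod (((f \<circ> f) ^^ k) z) \<le> (1 / 2) ^ k * \<delta>"
    using cycle_cubic_orbits_near_0[OF assms] unfolding N_def f_def by blast
  define S where "S = {z. cmod z < \<delta>}"
  have U: "sball (Some 0) (min 1 \<delta>) \<subseteq> Some ` S"
    unfolding S_def by (rule sball_Some_0_subset)
  have small: "eventually (\<lambda>k. (1 / 2) ^ k * \<delta> < \<eta>) sequentially" if "\<eta> > 0" for \<eta>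
  proof -
    have "(\<lambda>k. (1 / 2 :: real) ^ k * \<delta>) \<longlonglongrightarrow> 0"
      by (intro tendsto_mult_left_zero LIMSEQ_power_zero) simp
    then show ?thesis
      using that by (rule order_tendstoD(2))
  qed
  have "unif_conv_on (sball (Some 0) (min 1 \<delta>)) (\<lambda>k. N ^^ (2 * k)) (\<lambda>_. Some 0)"
  proof (rule unif_conv_on_Some_const[OF U])
    fix \<epsilon> :: real assume "\<epsilon> > 0"
    show "eventually (\<lambda>k. \<forall>z\<in>S. cmod (((f \<circ> f) ^^ k) z - 0) < \<epsilon>) sequentially"
      by (rule eventually_mono[OF small[OF \<open>\<epsilon> > 0\<close>]])
        (use order.strict_trans1[OF decay] in \<open>auto simp: S_def\<close>)
  qed (simp add: S_def even)
  moreover have "unif_conv_on (sball (Some 0) (min 1 \<delta>)) (\<lambda>k. N ^^ Suc (2 * k)) (\<lambda>_. Some 1)"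
  proof (rule unif_conv_on_Some_const[OF U])
    fix \<epsilon> :: real assume "\<epsilon> > 0"
    have "(f \<longlongrightarrow> f 0) (nhds 0)"
      using DERIV_isCont[OF newton_cycle_cubic(5)[OF assms]]
      by (metis f_def isCont_def tendsto_at_iff_tendsto_nhds)
    with \<open>\<epsilon> > 0\<close> obtain \<eta>
      where "\<eta> > 0" and \<eta>: "\<And>w. cmod w < \<eta> \<Longrightarrow> cmod (f w - 1) < \<epsilon>"
      using newton_cycle_cubic(3)[OF assms]
      unfolding f_def tendsto_iff eventually_nhds_metric by (fastforce simp: dist_norm)
    show "eventually (\<lambda>k. \<forall>z\<in>S. cmod (f (((f \<circ> f) ^^ k) z) - 1) < \<epsilon>) sequentially"
      by (rule eventually_mono[OF small[OF \<open>\<eta> > 0\<close>]])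
        (use order.strict_trans1[OF decay] \<eta> in \<open>auto simp: S_def\<close>)
  qed (rule odd, simp add: S_def)
  ultimately have "unif_conv_on (sball (Some 0) (min 1 \<delta>)) (\<lambda>k. N ^^ (2 * k + j))
      (\<lambda>_. Some (of_nat j))" if "j < 2" for j
    using that less_2_cases by fastforce
  then have "normal_family (sball (Some 0) (min 1 \<delta>)) (\<lambda>k. N ^^ k)"
    by (intro normal_family_if_unif_conv_on_residues[of 2]) simp_all
  with \<delta> show ?thesis
    unfolding fatou_set_def N_def by (intro CollectI exI[of _ "min 1 \<delta>"]) simp
qed

theorem theoremB:
  fixes h :: complex
  assumes "cmod (h - 1) < 1"
  shows "\<exists>p :: complex poly. degree p = 3 \<and> rsquarefree p \<and> \<not> unicritical p \<and>
           fatou_set (relaxed_newton h p) \<noteq>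
             (\<Union>z\<in>{z. poly p z = 0}. basin (relaxed_newton h p) (Some z))"
proof (intro exI[of _ "cycle_cubic h"] conjI)
  have h: "h \<noteq> 0" "h \<noteq> 2"
    using Re_bounds_if_cmod_diff_1_less_1[OF assms] by auto
  show "degree (cycle_cubic h) = 3"
    using h by (rule degree_cycle_cubic)
  show "rsquarefree (cycle_cubic h)"
    using assms by (rule rsquarefree_cycle_cubic)
  show "\<not> unicritical (cycle_cubic h)"
    using assms by (rule not_unicritical_cycle_cubic)
  have "(relaxed_newton h (cycle_cubic h) ^^ 2) (Some 0) = Some 0"
    using newton_cycle_cubic[OF h] by (simp add: numeral_2_eq_2 relaxed_newton_Some)
  then have "Some 0 \<notin> basin (relaxed_newton h (cycle_cubic h)) (Some z)"
    if "poly (cycle_cubic h) z = 0" for z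
    using that by (intro periodic_point_not_in_basin) (auto simp: poly_cycle_cubic)
  with zero_in_fatou_set_cycle_cubic[OF h] show "fatou_set (relaxed_newton h (cycle_cubic h)) \<noteq>
      (\<Union>z\<in>{z. poly (cycle_cubic h) z = 0}. basin (relaxed_newton h (cycle_cubic h)) (Some z))"
    by blast
qed

end
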